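(* For every formula $\varphi$ of Hennessy–Milner logic, the sets $[\![\varphi]\!]^a$ and $[\![\varphi]\!]^c$ are clopen in the Lawson topology of $\mathbb{D}$. In particular, $C_\Phi$ is Lawson-closed.
   Context: Fix a finite set $\mathrm{Act}$ of events. For a dcpo $D$, $K(D)$ denotes its compact elements; a bifinite (SFP) domain is an algebraic dcpo in which for each finite $F\subseteq K(D)$ iterated minimal-upper-bound sets are finite and in $K(D)$ and every upper bound of $F$ is above a minimal upper bound. Scott topology: sets $U={\uparrow}(U\cap K(D))$; Lawson topology generated by ${\uparrow}k\setminus{\uparrow}l$, $k,l\in K(D)$. Mixed powerdomain $\mathcal{M}(D)$: pairs $(L,U)$, $L$ Scott-closed, $U$ Lawson-closed upper, $L={\downarrow}(L\cap U)$, ordered by $L\subseteq L'$ and $U'\subseteq U$. $\mathbb{D}$ is the initial solution over bifinite domains of $\mathbb{D}\cong\prod_{\alpha\in\mathrm{Act}}\mathcal{M}(\mathbb{D})$, $d=((L^d_\alpha,U^d_\alpha))_\alpha$, viewed as a mixed transition system $(\mathbb{D},\mathbb{R}^a,\mathbb{R}^c)$ with $(d,\alpha,d')\in\mathbb{R}^a$ iff $d'\in L^d_\alpha$ and $(d,\alpha,d')\in\mathbb{R}^c$ iff $d'\in U^d_\alpha$. Hennessy–Milner logic: $\varphi::=tt\mid\neg\varphi\mid\langle\alpha\rangle\varphi\mid\varphi\wedge\varphi$; $[\alpha]\varphi:=\neg\langle\alpha\rangle\neg\varphi$, $\varphi\vee\psi:=\neg(\neg\varphi\wedge\neg\psi)$;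 empty conjunction $tt$, empty disjunction $\neg tt$. For $m\in\{a,c\}$ ($\neg a=c$, $\neg c=a$): $(\mathbb{D},d)\models^m tt$; $\models^m\neg\varphi$ iff not $\models^{\neg m}\varphi$; $(\mathbb{D},d)\models^m\langle\alpha\rangle\varphi$ iff $(\mathbb{D},d')\models^m\varphi$ for some $(d,\alpha,d')\in\mathbb{R}^m$; $\wedge$ componentwise. $[\![\varphi]\!]^m=\{d\in\mathbb{D} : (\mathbb{D},d)\models^m\varphi\}$. Process terms $p::=\mathbf{0}\mid\bot\mid\alpha_{tt}.p\mid\alpha_\bot.p\mid p+p$ (no summand of $+$ equal to $\mathbf{0}$ or $\bot$). Transitions: $\bot\xrightarrow{\gamma}_\bot\bot$ for all $\gamma$; $\alpha_{tt}.p\xrightarrow{\alpha}_{tt}p$; $\alpha_\bot.p\xrightarrow{\alpha}_\bot p$; if $p\xrightarrow{\alpha}_v p'$ then $p+q\xrightarrow{\alpha}_v p'$ and $q+p\xrightarrow{\alpha}_v p'$. Formulas: $\varphi_{\mathbf{0}}=\bigwedge_\alpha\neg\langle\alpha\rangle tt$; $\varphi_\bot=tt$; $\varphi_{\alpha_{tt}.p}=\langle\alpha\rangle\varphi_p\wedge[\alpha]\varphi_p\wedge\bigwedge_{\beta\ne\alpha}\neg\langle\beta\rangle tt$; $\varphi_{\alpha_\bot.p}=[\alpha]\varphi_p\wedge\bigwedge_{\beta\ne\alpha}\neg\langle\beta\rangle tt$; $\varphi_{p+q}=\bigwedge\{\langle\alpha\rangle\varphi_{r'} : p+q\xrightarrow{\alpha}_{tt}r'\}\wedge\bigwedge_\alpha[\alpha]\bigvee\{\varphi_{r'}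 : p+q\xrightarrow{\alpha}_v r',\ v\in\{\bot,tt\}\}$. For $w=\delta_1\cdots\delta_n\in\mathrm{Act}^*$, $\alpha\in\mathrm{Act}$, term $p$: $\psi_{w,\alpha,p}=[\delta_1]\cdots[\delta_n](\langle\alpha\rangle\varphi_p\vee\neg\langle\alpha\rangle\varphi_p)$; $\Phi$ is the set of all such formulas; $C_\Phi=\bigcap_{\psi\in\Phi}[\![\psi]\!]^a$. *)

theory Defs
  imports "HOL-Analysis.Analysis"
begin

section \<open>Basic domain theory on a partially ordered type (carrier = UNIV)\<close>

definition upset :: "'a::order set \<Rightarrow> 'a set" where
  "upset S = {y. \<exists>x\<in>S. x \<le> y}"

definition downset :: "'a::order set \<Rightarrow> 'a set" where
  "downset S = {y. \<exists>x\<in>S. y \<le> x}"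

definition directed :: "'a::order set \<Rightarrow> bool" where
  "directed S \<longleftrightarrow> S \<noteq> {} \<and> (\<forall>x\<in>S. \<forall>y\<in>S. \<exists>z\<in>S. x \<le> z \<and> y \<le> z)"

definition is_ub :: "'a::order set \<Rightarrow> 'a \<Rightarrow> bool" where
  "is_ub S u \<longleftrightarrow> (\<forall>x\<in>S. x \<le> u)"

definition is_lub :: "'a::order set \<Rightarrow> 'a \<Rightarrow> bool" where
  "is_lub S u \<longleftrightarrow> is_ub S u \<and> (\<forall>v. is_ub S v \<longrightarrow> u \<le> v)"

definition dcpo :: "'a::order itself \<Rightarrow> bool" where
  "dcpo _ \<longleftrightarrow> (\<forall>S::'a set. directed S \<longrightarrow> (\<exists>u. is_lub S u))"

definition compact_el :: "'a::order \<Rightarrow> bool" where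
  "compact_el k \<longleftrightarrow> (\<forall>S s. directed S \<and> is_lub S s \<and> k \<le> s \<longrightarrow> (\<exists>x\<in>S. k \<le> x))"

definition KD :: "'a::order set" where
  "KD = {k. compact_el k}"

definition algebraic :: "'a::order itself \<Rightarrow> bool" where
  "algebraic T \<longleftrightarrow> dcpo T \<and>
     (\<forall>x::'a. directed {k\<in>KD. k \<le> x} \<and> is_lub {k\<in>KD. k \<le> x} x)"

definition mub :: "'a::order set \<Rightarrow> 'a set" where
  "mub F = {u. is_ub F u \<and> (\<forall>v. is_ub F v \<and> v \<le> u \<longrightarrow> v = u)}"

definition mub_step :: "'a::order set \<Rightarrow> 'a set" where
  "mub_step X = \<Union>{mub Y | Y. Y \<subseteq> X \<and> finite Y}"

definition mub_closure :: "'a::order set \<Rightarrow> 'a set" where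
  "mub_closure F = (\<Union>n. (mub_step ^^ n) F)"

definition bifinite :: "'a::order itself \<Rightarrow> bool" where
  "bifinite T \<longleftrightarrow> algebraic T \<and>
     (\<forall>F::'a set. finite F \<and> F \<subseteq> KD \<longrightarrow>
        finite (mub_closure F) \<and> mub_closure F \<subseteq> KD \<and>
        (\<forall>u. is_ub F u \<longrightarrow> (\<exists>m\<in>mub F. m \<le> u)))"

definition scott_open :: "'a::order set \<Rightarrow> bool" where
  "scott_open U \<longleftrightarrow> U = upset (U \<inter> KD)"

definition scott_closed :: "'a::order set \<Rightarrow> bool" where
  "scott_closed C \<longleftrightarrow> scott_open (- C)"

definition scott_closure :: "'a::order set \<Rightarrow> 'a set" where
  "scott_closure S = \<Inter>{C. scott_closed C \<and> S \<subseteq> C}"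

definition lawson :: "'a::order topology" where
  "lawson = topology_generated_by
     ({upset {k} | k. k \<in> KD} \<union> {- upset {l} | l. l \<in> KD})"

definition lawson_clopen :: "'a::order set \<Rightarrow> bool" where
  "lawson_clopen S \<longleftrightarrow> openin lawson S \<and> closedin lawson S"

definition mixed_pd :: "('a::order set \<times> 'a set) set" where
  "mixed_pd = {(L, U). scott_closed L \<and> closedin lawson U \<and> upset U = U
                      \<and> L = downset (L \<inter> U)}"

definition mixed_le :: "('a::order set \<times> 'a set) \<Rightarrow> ('a set \<times> 'a set) \<Rightarrow> bool" where
  "mixed_le x y \<longleftrightarrow> fst x \<subseteq> fst y \<and> snd y \<subseteq> snd x"

definition mixed_map :: "('a::order \<Rightarrow> 'a) \<Rightarrow> ('a set \<times> 'a set) \<Rightarrow> ('a set \<times> 'a set)" where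
  "mixed_map f x = (scott_closure (f ` fst x), upset (f ` snd x))"

text \<open>isom : D \<rightarrow> \<Prod>_{\<alpha>\<in>Act} M(D) is an order isomorphism; initiality (canonicity)
  is expressed by Pitts' minimal invariance: the identity is the least upper
  bound of the iterates delta_n of the functional f \<mapsto> isom^{-1} o \<Prod>M(f) o isom
  starting from the constant bottom map.\<close>

definition is_solution :: "('d::order \<Rightarrow> ('act \<Rightarrow> 'd set \<times> 'd set)) \<Rightarrow> bool" where
  "is_solution isom \<longleftrightarrow>
     bij_betw isom UNIV {g. \<forall>\<alpha>. g \<alpha> \<in> mixed_pd} \<and>
     (\<forall>d d'. d \<le> d' \<longleftrightarrow> (\<forall>\<alpha>. mixed_le (isom d \<alpha>) (isom d' \<alpha>)))"

definition approx_step :: "('d::order \<Rightarrow> ('act \<Rightarrow> 'd set \<times> 'd set)) \<Rightarrow> ('d \<Rightarrow> 'd) \<Rightarrow> ('d \<Rightarrow> 'd)" where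
  "approx_step isom f = (\<lambda>d. inv isom (\<lambda>\<alpha>. mixed_map f (isom d \<alpha>)))"

primrec approx :: "('d::order \<Rightarrow> ('act \<Rightarrow> 'd set \<times> 'd set)) \<Rightarrow> nat \<Rightarrow> 'd \<Rightarrow> 'd" where
  "approx isom 0 = (\<lambda>d. inv isom (\<lambda>\<alpha>. ({}, UNIV)))"
| "approx isom (Suc n) = approx_step isom (approx isom n)"

definition minimal_invariant :: "('d::order \<Rightarrow> ('act \<Rightarrow> 'd set \<times> 'd set)) \<Rightarrow> bool" where
  "minimal_invariant isom \<longleftrightarrow> (\<forall>d. is_lub (range (\<lambda>n. approx isom n d)) d)"

definition initial_solution :: "('d::order \<Rightarrow> ('act::finite \<Rightarrow> 'd set \<times> 'd set)) \<Rightarrow> bool" where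
  "initial_solution isom \<longleftrightarrow> bifinite TYPE('d) \<and> is_solution isom \<and> minimal_invariant isom"

datatype 'act hml = TT | Neg "'act hml" | Dia 'act "'act hml" | Conj "'act hml" "'act hml"

definition Box :: "'act \<Rightarrow> 'act hml \<Rightarrow> 'act hml" where
  "Box \<alpha> \<phi> = Neg (Dia \<alpha> (Neg \<phi>))"

definition Disj :: "'act hml \<Rightarrow> 'act hml \<Rightarrow> 'act hml" where
  "Disj \<phi> \<psi> = Neg (Conj (Neg \<phi>) (Neg \<psi>))"

datatype mode = ModeA | ModeC

fun neg_mode :: "mode \<Rightarrow> mode" where
  "neg_mode ModeA = ModeC" | "neg_mode ModeC = ModeA"

fun trans_rel :: "('d \<Rightarrow> ('act \<Rightarrow> 'd set \<times> 'd set)) \<Rightarrow> mode \<Rightarrow> 'd \<Rightarrow> 'act \<Rightarrow> 'd \<Rightarrow> bool" where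
  "trans_rel isom ModeA d \<alpha> d' \<longleftrightarrow> d' \<in> fst (isom d \<alpha>)"
| "trans_rel isom ModeC d \<alpha> d' \<longleftrightarrow> d' \<in> snd (isom d \<alpha>)"

primrec sat :: "('d \<Rightarrow> ('act \<Rightarrow> 'd set \<times> 'd set)) \<Rightarrow> mode \<Rightarrow> 'd \<Rightarrow> 'act hml \<Rightarrow> bool" where
  "sat isom m d TT \<longleftrightarrow> True"
| "sat isom m d (Neg \<phi>) \<longleftrightarrow> \<not> sat isom (neg_mode m) d \<phi>"
| "sat isom m d (Dia \<alpha> \<phi>) \<longleftrightarrow> (\<exists>d'. trans_rel isom m d \<alpha> d' \<and> sat isom m d' \<phi>)"
| "sat isom m d (Conj \<phi> \<psi>) \<longleftrightarrow> sat isom m d \<phi> \<and> sat isom m d \<psi>"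

definition sem :: "('d \<Rightarrow> ('act \<Rightarrow> 'd set \<times> 'd set)) \<Rightarrow> mode \<Rightarrow> 'act hml \<Rightarrow> 'd set" where
  "sem isom m \<phi> = {d. sat isom m d \<phi>}"

fun conj_list :: "'act hml list \<Rightarrow> 'act hml" where
  "conj_list [] = TT"
| "conj_list [\<phi>] = \<phi>"
| "conj_list (\<phi> # \<psi>s) = Conj \<phi> (conj_list \<psi>s)"

fun disj_list :: "'act hml list \<Rightarrow> 'act hml" where
  "disj_list [] = Neg TT"
| "disj_list [\<phi>] = \<phi>"
| "disj_list (\<phi> # \<psi>s) = Disj \<phi> (disj_list \<psi>s)"

definition BigConj :: "'act hml set \<Rightarrow> 'act hml" where
  "BigConj S = conj_list (SOME xs. set xs = S \<and> distinct xs)"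

definition BigDisj :: "'act hml set \<Rightarrow> 'act hml" where
  "BigDisj S = disj_list (SOME xs. set xs = S \<and> distinct xs)"

datatype 'act proc = Nil0 | Bot | PreTT 'act "'act proc" | PreBot 'act "'act proc"
  | Sum "'act proc" "'act proc"

fun wf_proc :: "'act proc \<Rightarrow> bool" where
  "wf_proc Nil0 = True"
| "wf_proc Bot = True"
| "wf_proc (PreTT \<alpha> p) = wf_proc p"
| "wf_proc (PreBot \<alpha> p) = wf_proc p"
| "wf_proc (Sum p q) \<longleftrightarrow> wf_proc p \<and> wf_proc q \<and> p \<notin> {Nil0, Bot} \<and> q \<notin> {Nil0, Bot}"

text \<open>Transitions p --\<alpha>-->_v p', with v = True for tt and v = False for \<bottom>.\<close>
inductive step :: "'act proc \<Rightarrow> 'act \<Rightarrow> bool \<Rightarrow> 'act proc \<Rightarrow> bool" where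
  bot: "step Bot \<gamma> False Bot"
| pre_tt: "step (PreTT \<alpha> p) \<alpha> True p"
| pre_bot: "step (PreBot \<alpha> p) \<alpha> False p"
| sum_l: "step p \<alpha> v p' \<Longrightarrow> step (Sum p q) \<alpha> v p'"
| sum_r: "step p \<alpha> v p' \<Longrightarrow> step (Sum q p) \<alpha> v p'"

lemma step_size: "step p \<alpha> v p' \<Longrightarrow> size p' \<le> size p"
  by (induction rule: step.induct) auto

lemma step_Sum_size: "step (Sum p q) \<alpha> v r \<Longrightarrow> size r < size (Sum p q)"
proof -
  assume "step (Sum p q) \<alpha> v r"
  then have "step p \<alpha> v r \<or> step q \<alpha> v r"
    by (cases rule: step.cases) auto
  then show ?thesis by (auto dest!: step_size)
qed

function char_formula :: "'act proc \<Rightarrow> 'act hml" where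
  "char_formula Nil0 = BigConj {Neg (Dia \<alpha> TT) | \<alpha>. True}"
| "char_formula Bot = TT"
| "char_formula (PreTT \<alpha> p) =
     Conj (Dia \<alpha> (char_formula p))
       (Conj (Box \<alpha> (char_formula p)) (BigConj {Neg (Dia \<beta> TT) | \<beta>. \<beta> \<noteq> \<alpha>}))"
| "char_formula (PreBot \<alpha> p) =
     Conj (Box \<alpha> (char_formula p)) (BigConj {Neg (Dia \<beta> TT) | \<beta>. \<beta> \<noteq> \<alpha>})"
| "char_formula (Sum p q) =
     Conj (BigConj ((\<lambda>(\<alpha>, r). Dia \<alpha> (char_formula r)) ` {(\<alpha>, r). step (Sum p q) \<alpha> True r}))
          (BigConj ((\<lambda>\<alpha>. Box \<alpha> (BigDisj (char_formula ` {r. \<exists>v. step (Sum p q) \<alpha> v r}))) ` UNIV))"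
  by pat_completeness auto
termination
  by (relation "Wellfounded.measure size") (auto dest: step_Sum_size)

definition boxes :: "'act list \<Rightarrow> 'act hml \<Rightarrow> 'act hml" where
  "boxes w \<phi> = foldr Box w \<phi>"

definition psi :: "'act list \<Rightarrow> 'act \<Rightarrow> 'act proc \<Rightarrow> 'act hml" where
  "psi w \<alpha> p = boxes w (Disj (Dia \<alpha> (char_formula p)) (Neg (Dia \<alpha> (char_formula p))))"

definition PhiSet :: "'act hml set" where
  "PhiSet = {psi w \<alpha> p | w \<alpha> p. wf_proc p}"

definition C_Phi :: "('d \<Rightarrow> ('act \<Rightarrow> 'd set \<times> 'd set)) \<Rightarrow> 'd set" where
  "C_Phi isom = (\<Inter>\<psi>\<in>PhiSet. sem isom ModeA \<psi>)"

end

(*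
  Write delta_n for the n-th approximant of the initial solution. The delta_n are monotone
  deflations with finite range such that delta_n o delta_(n+1) = delta_n and sup_n delta_n = id,
  and their values are compact. A formula of modal depth at most n cannot distinguish d from
  delta_n d, and may-satisfaction is upward, must-satisfaction downward closed. Hence [[phi]]^a,
  and likewise the complement of [[phi]]^c, is the up-set of the finitely many compact elements
  delta_n d it contains; up-sets of finite sets of compact elements are Lawson clopen.

  Compactness of the values of delta_n uses the description of directed suprema of D through
  the mixed powerdomain, which in turn needs Lawson compactness of D. The latter follows from
  the deflations by a Koenig-type argument: the images of a filtered family of closed sets
  under delta_n stabilise, a compatible thread through these images exists, and its supremum
  lies in every member of the family.
*)
theory Submission
  imports Defs
begin

section \<open>Directed sets and compact elements\<close>

abbreviation compacts_below :: "'a::order \<Rightarrow> 'a set" where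
  "compacts_below x \<equiv> {k \<in> KD. k \<le> x}"

lemma directed_nonempty: "directed S \<Longrightarrow> S \<noteq> {}"
  unfolding directed_def by blast

lemma directed_upper_bound: "directed S \<Longrightarrow> x \<in> S \<Longrightarrow> y \<in> S \<Longrightarrow> \<exists>z\<in>S. x \<le> z \<and> y \<le> z"
  unfolding directed_def by blast

lemma directed_ex_all_finite:
  assumes "directed S" "finite J"
    and ex: "\<And>j. j \<in> J \<Longrightarrow> \<exists>x\<in>S. Q j x" and up: "\<And>j x y. Q j x \<Longrightarrow> x \<le> y \<Longrightarrow> Q j y"
  shows "\<exists>z\<in>S. \<forall>j\<in>J. Q j z"
  using assms(2) ex
proof (induction J rule: finite_induct)
  case empty
  then show ?case using directed_nonempty[OF assms(1)] by blast
next
  case (insert j J)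
  then obtain z where "z \<in> S" "\<forall>i\<in>J. Q i z" by blast
  moreover obtain x where "x \<in> S" "Q j x"
    using insert.prems by blast
  moreover obtain w where "w \<in> S" "x \<le> w" "z \<le> w"
    using directed_upper_bound[OF assms(1) \<open>x \<in> S\<close> \<open>z \<in> S\<close>] by blast
  ultimately show ?case
    using up by blast
qed

lemma directed_finite_upper_bound:
  assumes "directed S" "finite F" "F \<subseteq> S"
  shows "\<exists>z\<in>S. \<forall>x\<in>F. x \<le> z"
  using assms order_trans by (intro directed_ex_all_finite) blast+

lemma directed_chain_range:
  assumes "\<And>i. p i \<le> p (Suc i)"
  shows "directed (range p)"
  unfolding directed_def
proof (intro conjI ballI)
  fix x y assume "x \<in> range p" "y \<in> range p"
  then obtain i j where "x = p i" "y = p j" by blast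
  then show "\<exists>z\<in>range p. x \<le> z \<and> y \<le> z"
    using lift_Suc_mono_le[of p, OF assms] by (metis max.cobounded1 max.cobounded2 rangeI)
qed simp

lemma is_lub_upper: "is_lub S u \<Longrightarrow> x \<in> S \<Longrightarrow> x \<le> u"
  unfolding is_lub_def is_ub_def by blast

lemma is_lub_least: "is_lub S u \<Longrightarrow> (\<And>x. x \<in> S \<Longrightarrow> x \<le> v) \<Longrightarrow> u \<le> v"
  unfolding is_lub_def is_ub_def by blast

lemma compactD: "k \<in> KD \<Longrightarrow> directed S \<Longrightarrow> is_lub S s \<Longrightarrow> k \<le> s \<Longrightarrow> \<exists>x\<in>S. k \<le> x"
  unfolding KD_def compact_el_def by blast

lemma least_in_KD:
  assumes "\<And>x. b \<le> x"
  shows "b \<in> KD"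
  unfolding KD_def compact_el_def using assms directed_nonempty by blast

lemma eventually_compact_below_chain:
  assumes chain: "\<And>i. p i \<le> p (Suc i)" and "is_lub (range p) y" "c \<in> KD" "c \<le> y"
  shows "\<forall>\<^sub>F i in sequentially. c \<le> p i"
proof -
  obtain i0 where "c \<le> p i0"
    using compactD[OF assms(3) directed_chain_range[of p, OF chain] assms(2,4)] by blast
  then have "\<forall>i\<ge>i0. c \<le> p i"
    using lift_Suc_mono_le[of p, OF chain] order_trans by blast
  then show ?thesis unfolding eventually_sequentially by blast
qed

lemma algebraicD:
  assumes "algebraic TYPE('a::order)"
  shows "directed (compacts_below (x::'a))" "is_lub (compacts_below x) x"
  using assms unfolding algebraic_def by blast+

lemma compacts_below_nonempty:
  "algebraic TYPE('a::order) \<Longrightarrow> compacts_below (x::'a) \<noteq> {}"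
  using algebraicD(1) directed_nonempty by blast

lemma le_if_compacts_below_le:
  assumes "algebraic TYPE('a::order)" "\<And>k. k \<in> KD \<Longrightarrow> k \<le> x \<Longrightarrow> k \<le> y"
  shows "(x::'a) \<le> y"
  using is_lub_least[OF algebraicD(2)[OF assms(1)]] assms(2) by blast

lemma downset_mono: "A \<subseteq> B \<Longrightarrow> downset A \<subseteq> downset B"
  unfolding downset_def by blast

lemma upset_mono: "A \<subseteq> B \<Longrightarrow> upset A \<subseteq> upset B"
  unfolding upset_def by blast

lemma downset_downset: "downset (downset X) = downset (X::'a::order set)"
  unfolding downset_def using order_trans by blast

lemma upset_upset: "upset (upset X) = upset (X::'a::order set)"
  unfolding upset_def using order_trans by blast

lemma upset_singleton_antimono:
  assumes "a \<le> b"
  shows "upset {b} \<subseteq> upset {a::'a::order}"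
proof
  fix y assume "y \<in> upset {b}"
  then have "a \<le> y"
    unfolding upset_def using order_trans[OF assms] by blast
  then show "y \<in> upset {a}"
    unfolding upset_def by blast
qed

lemma upset_eq_UN: "upset X = (\<Union>x\<in>X. upset {x})"
  unfolding upset_def by blast

lemma downset_image_downset_image:
  assumes "mono f" "\<And>x. f (g x) = f x"
  shows "downset (f ` downset (g ` L)) = downset (f ` (L::'a::order set))"
proof
  show "downset (f ` downset (g ` L)) \<subseteq> downset (f ` L)"
  proof
    fix z assume "z \<in> downset (f ` downset (g ` L))"
    then obtain y l where "z \<le> f y" "y \<le> g l" "l \<in> L" unfolding downset_def by blast
    then have "z \<le> f l" using monoD[OF assms(1)] assms(2) order_trans by metis
    with \<open>l \<in> L\<close> show "z \<in> downset (f ` L)" unfolding downset_def by blast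
  qed
  show "downset (f ` L) \<subseteq> downset (f ` downset (g ` L))"
  proof
    fix z assume "z \<in> downset (f ` L)"
    then obtain l where "z \<le> f (g l)" "l \<in> L" unfolding downset_def assms(2) by blast
    moreover have "g l \<in> downset (g ` L)" using \<open>l \<in> L\<close> unfolding downset_def by blast
    ultimately show "z \<in> downset (f ` downset (g ` L))" unfolding downset_def by blast
  qed
qed

lemma upset_image_upset_image:
  assumes "mono f" "\<And>x. f (g x) = f x"
  shows "upset (f ` upset (g ` U)) = upset (f ` (U::'a::order set))"
proof
  show "upset (f ` upset (g ` U)) \<subseteq> upset (f ` U)"
  proof
    fix z assume "z \<in> upset (f ` upset (g ` U))"
    then obtain y u where "f y \<le> z" "g u \<le> y" "u \<in> U" unfolding upset_def by blast
    then have "f u \<le> z" using monoD[OF assms(1)] assms(2) order_trans by metis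
    with \<open>u \<in> U\<close> show "z \<in> upset (f ` U)" unfolding upset_def by blast
  qed
  show "upset (f ` U) \<subseteq> upset (f ` upset (g ` U))"
  proof
    fix z assume "z \<in> upset (f ` U)"
    then obtain u where "f (g u) \<le> z" "u \<in> U" unfolding upset_def assms(2) by blast
    moreover have "g u \<in> upset (g ` U)" using \<open>u \<in> U\<close> unfolding upset_def by blast
    ultimately show "z \<in> upset (f ` upset (g ` U))" unfolding upset_def by blast
  qed
qed

lemma bex_downset_image_iff:
  assumes "\<And>x y. x \<le> y \<Longrightarrow> P x \<Longrightarrow> P y"
  shows "(\<exists>y\<in>downset (f ` X). P y) \<longleftrightarrow> (\<exists>x\<in>X. P (f x))"
proof
  assume "\<exists>y\<in>downset (f ` X). P y"
  then obtain x y where "x \<in> X" "y \<le> f x" "P y"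
    unfolding downset_def by blast
  then show "\<exists>x\<in>X. P (f x)"
    using assms by blast
qed (auto simp: downset_def)

lemma bex_upset_image_iff:
  assumes "\<And>x y. x \<le> y \<Longrightarrow> P y \<Longrightarrow> P x"
  shows "(\<exists>y\<in>upset (f ` X). P y) \<longleftrightarrow> (\<exists>x\<in>X. P (f x))"
proof
  assume "\<exists>y\<in>upset (f ` X). P y"
  then obtain x y where "x \<in> X" "f x \<le> y" "P y"
    unfolding upset_def by blast
  then show "\<exists>x\<in>X. P (f x)"
    using assms by blast
qed (auto simp: upset_def)

section \<open>Scott and Lawson topologies\<close>

lemma scott_closed_iff:
  "scott_closed (C::'a::order set) \<longleftrightarrow>
    (\<forall>x y. y \<le> x \<longrightarrow> x \<in> C \<longrightarrow> y \<in> C) \<and> (\<forall>z. compacts_below z \<subseteq> C \<longrightarrow> z \<in> C)"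
    (is "_ \<longleftrightarrow> ?down \<and> ?compacts")
proof -
  have "scott_closed C \<longleftrightarrow> (\<forall>x. x \<notin> C \<longleftrightarrow> (\<exists>k\<in>KD. k \<le> x \<and> k \<notin> C))"
    unfolding scott_closed_def scott_open_def upset_def by blast
  also have "\<dots> \<longleftrightarrow> ?down \<and> ?compacts"
  proof
    assume compl: "\<forall>x. x \<notin> C \<longleftrightarrow> (\<exists>k\<in>KD. k \<le> x \<and> k \<notin> C)"
    show "?down \<and> ?compacts"
    proof (intro conjI allI impI)
      fix x y assume "y \<le> x" "x \<in> C"
      show "y \<in> C"
      proof (rule ccontr)
        assume "y \<notin> C"
        then obtain k where "k \<in> KD" "k \<le> y" "k \<notin> C" using compl by blast
        then show False using compl \<open>y \<le> x\<close> \<open>x \<in> C\<close> order_trans by blast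
      qed
    next
      fix z assume "compacts_below z \<subseteq> C"
      then show "z \<in> C" using compl by blast
    qed
  next
    assume closed: "?down \<and> ?compacts"
    show "\<forall>x. x \<notin> C \<longleftrightarrow> (\<exists>k\<in>KD. k \<le> x \<and> k \<notin> C)"
    proof (intro allI iffI)
      fix x assume "x \<notin> C"
      then have "\<not> compacts_below x \<subseteq> C" using closed by blast
      then show "\<exists>k\<in>KD. k \<le> x \<and> k \<notin> C" by blast
    next
      fix x assume "\<exists>k\<in>KD. k \<le> x \<and> k \<notin> C"
      then show "x \<notin> C" using closed by blast
    qed
  qed
  finally show ?thesis .
qed

lemma scott_closed_compacts_below_downset:
  "scott_closed {z. compacts_below z \<subseteq> downset (X::'a::order set)}"
  unfolding scott_closed_iff
proof (intro conjI allI impI)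
  fix x y :: 'a
  assume "y \<le> x" "x \<in> {z. compacts_below z \<subseteq> downset X}"
  then show "y \<in> {z. compacts_below z \<subseteq> downset X}"
    using order_trans by blast
next
  fix z :: 'a
  assume "compacts_below z \<subseteq> {z. compacts_below z \<subseteq> downset X}"
  then have "k \<in> downset X" if "k \<in> compacts_below z" for k
    using that by blast
  then show "z \<in> {z. compacts_below z \<subseteq> downset X}"
    by blast
qed

lemma scott_closure_eq:
  "scott_closure (X::'a::order set) = {z. compacts_below z \<subseteq> downset X}"
  unfolding scott_closure_def
proof (rule subset_antisym)
  show "\<Inter>{C. scott_closed C \<and> X \<subseteq> C} \<subseteq> {z. compacts_below z \<subseteq> downset X}"
  proof (rule Inter_lower, intro CollectI conjI)
    show "X \<subseteq> {z. compacts_below z \<subseteq> downset X}"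
      unfolding downset_def by blast
  qed (rule scott_closed_compacts_below_downset)
  show "{z. compacts_below z \<subseteq> downset X} \<subseteq> \<Inter>{C. scott_closed C \<and> X \<subseteq> C}"
  proof (rule Inter_greatest)
    fix C assume "C \<in> {C. scott_closed C \<and> X \<subseteq> C}"
    then have down: "\<forall>x y. y \<le> x \<longrightarrow> x \<in> C \<longrightarrow> y \<in> C"
      and compacts: "\<forall>z. compacts_below z \<subseteq> C \<longrightarrow> z \<in> C" and "X \<subseteq> C"
      unfolding scott_closed_iff by blast+
    then have "downset X \<subseteq> C"
      unfolding downset_def by blast
    then show "{z. compacts_below z \<subseteq> downset X} \<subseteq> C"
      using compacts by blast
  qed
qed

lemma subset_scott_closure: "X \<subseteq> scott_closure X"
  unfolding scott_closure_def by blast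

lemma scott_closed_scott_closure:
  "scott_closed (scott_closure (X::'a::order set))"
  by (simp add: scott_closure_eq scott_closed_compacts_below_downset)

lemma compact_in_scott_closure:
  "c \<in> KD \<Longrightarrow> c \<in> scott_closure (X::'a::order set) \<Longrightarrow> c \<in> downset X"
  by (force simp: scott_closure_eq)

lemma scott_closure_finite:
  assumes alg: "algebraic TYPE('a::order)" and "finite (X::'a set)"
  shows "scott_closure X = downset X"
proof
  show "downset X \<subseteq> scott_closure X"
  proof
    fix z assume "z \<in> downset X"
    then obtain x where "x \<in> X" "z \<le> x" unfolding downset_def by blast
    then have "compacts_below z \<subseteq> downset X"
      unfolding downset_def using order_trans[of _ z x] by blast
    then show "z \<in> scott_closure X" unfolding scott_closure_eq by blast
  qed
  show "scott_closure X \<subseteq> downset X"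
  proof
    fix z assume z: "z \<in> scott_closure X"
    show "z \<in> downset X"
    proof (rule ccontr)
      assume "z \<notin> downset X"
      then have "\<forall>x\<in>X. \<exists>c. c \<in> compacts_below z \<and> \<not> c \<le> x"
        using le_if_compacts_below_le[OF alg, of z] unfolding downset_def by blast
      then obtain cf where cf: "\<forall>x\<in>X. cf x \<in> compacts_below z \<and> \<not> cf x \<le> x"
        by (rule bchoice[THEN exE])
      have "finite (cf ` X)" "cf ` X \<subseteq> compacts_below z"
        using assms(2) cf by auto
      from directed_finite_upper_bound[OF algebraicD(1)[OF alg] this]
      obtain c where c: "c \<in> compacts_below z" "\<forall>y\<in>cf ` X. y \<le> c"
        by blast
      then obtain x where "x \<in> X" "c \<le> x"
        using z unfolding scott_closure_eq downset_def by blast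
      then show False using c(2) cf order_trans[of "cf x" c x] by auto
    qed
  qed
qed

lemma topspace_lawson:
  assumes "algebraic TYPE('a::order)"
  shows "topspace (lawson :: 'a topology) = UNIV"
proof -
  have "x \<in> \<Union>({upset {k} | k. k \<in> KD} \<union> {- upset {l} | l. l \<in> KD})" for x :: 'a
  proof -
    obtain k where "k \<in> compacts_below x"
      using compacts_below_nonempty[OF assms] by blast
    then have "x \<in> upset {k}" "upset {k} \<in> {upset {k} | k. k \<in> KD}"
      unfolding upset_def by auto
    then show ?thesis by blast
  qed
  then show ?thesis
    unfolding lawson_def topology_generated_by_topspace by blast
qed

lemma closedin_lawson_iff:
  "algebraic TYPE('a::order) \<Longrightarrow> closedin lawson (F::'a set) \<longleftrightarrow> openin lawson (- F)"
  unfolding closedin_def by (simp add: topspace_lawson Compl_eq_Diff_UNIV)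

lemma openin_lawson_upset_compact: "k \<in> KD \<Longrightarrow> openin lawson (upset {k})"
  unfolding lawson_def by (rule topology_generated_by_Basis) blast

lemma openin_lawson_Compl_upset_compact: "k \<in> KD \<Longrightarrow> openin lawson (- upset {k})"
  unfolding lawson_def by (rule topology_generated_by_Basis) blast

lemma openin_lawson_upset: "X \<subseteq> KD \<Longrightarrow> openin lawson (upset X)"
  unfolding upset_eq_UN[of X] using openin_lawson_upset_compact by (intro openin_Union) blast

lemma scott_closed_imp_lawson_closed:
  assumes "algebraic TYPE('a::order)" "scott_closed (C::'a set)"
  shows "closedin lawson C"
  using assms openin_lawson_upset[of "- C \<inter> KD"]
  unfolding closedin_lawson_iff[OF assms(1)] scott_closed_def scott_open_def by simp

lemma closedin_lawson_upset_single:
  assumes alg: "algebraic TYPE('a::order)"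
  shows "closedin lawson (upset {x::'a})"
proof -
  have "upset {x} = (\<Inter>k\<in>compacts_below x. upset {k})"
  proof
    show "upset {x} \<subseteq> (\<Inter>k\<in>compacts_below x. upset {k})"
    proof
      fix y assume "y \<in> upset {x}"
      then have "k \<le> y" if "k \<le> x" for k
        using that order_trans unfolding upset_def by blast
      then show "y \<in> (\<Inter>k\<in>compacts_below x. upset {k})"
        unfolding upset_def by blast
    qed
    show "(\<Inter>k\<in>compacts_below x. upset {k}) \<subseteq> upset {x}"
    proof
      fix y assume y: "y \<in> (\<Inter>k\<in>compacts_below x. upset {k})"
      have "k \<le> y" if "k \<in> KD" "k \<le> x" for k
        using y that unfolding upset_def by blast
      then have "x \<le> y" by (rule le_if_compacts_below_le[OF alg])
      then show "y \<in> upset {x}" unfolding upset_def by blast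
    qed
  qed
  moreover have "closedin lawson (\<Inter>k\<in>compacts_below x. upset {k})"
    using compacts_below_nonempty[OF alg] openin_lawson_Compl_upset_compact
    by (intro closedin_INT) (auto simp: closedin_lawson_iff[OF alg])
  ultimately show ?thesis by simp
qed

lemma closedin_lawson_upset_finite:
  "algebraic TYPE('a::order) \<Longrightarrow> finite (X::'a set) \<Longrightarrow> closedin lawson (upset X)"
  unfolding upset_eq_UN[of X] by (intro closedin_Union) (auto intro: closedin_lawson_upset_single)

lemma lawson_clopen_upset:
  "algebraic TYPE('a::order) \<Longrightarrow> finite (X::'a set) \<Longrightarrow> X \<subseteq> KD \<Longrightarrow> lawson_clopen (upset X)"
  unfolding lawson_clopen_def using openin_lawson_upset closedin_lawson_upset_finite by blast

lemma lawson_clopen_Compl: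
  "algebraic TYPE('a::order) \<Longrightarrow> lawson_clopen (X::'a set) \<Longrightarrow> lawson_clopen (- X)"
  unfolding lawson_clopen_def by (simp add: closedin_lawson_iff)

definition lawson_basic :: "'a::order set \<Rightarrow> 'a set \<Rightarrow> 'a set" where
  "lawson_basic C L = {z. (\<forall>c\<in>C. c \<le> z) \<and> (\<forall>l\<in>L. \<not> l \<le> z)}"

lemma lawson_basic_Int:
  "lawson_basic C L \<inter> lawson_basic C' L' = lawson_basic (C \<union> C') (L \<union> L')"
  unfolding lawson_basic_def by blast

lemma openin_lawson_basic_nbhd:
  assumes "openin lawson U" "y \<in> U"
  shows "\<exists>C L. finite C \<and> finite L \<and> C \<subseteq> KD \<and> L \<subseteq> KD \<and>
    y \<in> lawson_basic C L \<and> lawson_basic C L \<subseteq> U"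
  using assms unfolding lawson_def openin_topology_generated_by_iff
proof (induction arbitrary: y rule: generate_topology_on.induct)
  case (Int U V)
  then obtain C L C' L' where
    "finite C \<and> finite L \<and> C \<subseteq> KD \<and> L \<subseteq> KD \<and> y \<in> lawson_basic C L \<and> lawson_basic C L \<subseteq> U"
    "finite C' \<and> finite L' \<and> C' \<subseteq> KD \<and> L' \<subseteq> KD \<and> y \<in> lawson_basic C' L' \<and> lawson_basic C' L' \<subseteq> V"
    by (meson IntD1 IntD2)
  then show ?case
    by (intro exI[of _ "C \<union> C'"] exI[of _ "L \<union> L'"]) (simp add: lawson_basic_Int[symmetric], blast)
next
  case (UN K)
  then obtain U where "U \<in> K" "y \<in> U" by blast
  then obtain C L where
    "finite C \<and> finite L \<and> C \<subseteq> KD \<and> L \<subseteq> KD \<and> y \<in> lawson_basic C L \<and> lawson_basic C L \<subseteq> U"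
    using UN.IH[of U y] by blast
  then show ?case using \<open>U \<in> K\<close> by blast
next
  case (Basis s)
  then consider k where "k \<in> KD" "s = upset {k}" | l where "l \<in> KD" "s = - upset {l}"
    by blast
  then show ?case
  proof cases
    case 1
    then show ?thesis using Basis.prems
      by (intro exI[of _ "{k}"] exI[of _ "{}"]) (auto simp: lawson_basic_def upset_def)
  next
    case 2
    then show ?thesis using Basis.prems
      by (intro exI[of _ "{}"] exI[of _ "{l}"]) (auto simp: lawson_basic_def upset_def)
  qed
qed simp

section \<open>The mixed powerdomain\<close>

lemma mixed_pdD:
  assumes "(L, U) \<in> mixed_pd"
  shows "scott_closed L" "closedin lawson U" "upset U = U" "L = downset (L \<inter> U)"
  using assms unfolding mixed_pd_def by auto

lemma mixed_pd_fst_downward_closed: "(L, U) \<in> mixed_pd \<Longrightarrow> y \<le> x \<Longrightarrow> x \<in> L \<Longrightarrow> y \<in> L"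
  using mixed_pdD(1) unfolding scott_closed_iff by blast

lemma mixed_pd_snd_upward_closed: "(L, U) \<in> mixed_pd \<Longrightarrow> x \<le> y \<Longrightarrow> x \<in> U \<Longrightarrow> y \<in> U"
  using mixed_pdD(3) unfolding upset_def by blast

lemma mixed_pd_fst_below_snd: "(L, U) \<in> mixed_pd \<Longrightarrow> x \<in> L \<Longrightarrow> \<exists>y. x \<le> y \<and> y \<in> L \<and> y \<in> U"
  using mixed_pdD(4) unfolding downset_def by blast

lemma closedin_lawson_snd_mixed_pd: "p \<in> mixed_pd \<Longrightarrow> closedin lawson (snd p)"
  using mixed_pdD(2)[of "fst p" "snd p"] by simp

lemma bot_mixed_pd:
  assumes alg: "algebraic TYPE('a::order)"
  shows "({}, UNIV) \<in> (mixed_pd :: ('a set \<times> 'a set) set)"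
proof -
  have "scott_closed ({}::'a set)"
    unfolding scott_closed_iff using compacts_below_nonempty[OF alg] by blast
  moreover have "closedin lawson (UNIV::'a set)"
    using closedin_topspace[of "lawson::'a topology"] by (simp add: topspace_lawson[OF alg])
  ultimately show ?thesis
    unfolding mixed_pd_def upset_def downset_def by blast
qed

lemma mixed_pd_image:
  assumes alg: "algebraic TYPE('a::order)" and "mono (f::'a \<Rightarrow> 'a)" "finite (range f)"
    and LU: "(L, U) \<in> mixed_pd"
  shows "(downset (f ` L), upset (f ` U)) \<in> mixed_pd"
proof -
  have fin: "finite (f ` L)" "finite (f ` U)"
    using assms(3) by (meson finite_subset image_mono subset_UNIV)+
  have "downset (f ` L) \<subseteq> downset (downset (f ` L) \<inter> upset (f ` U))"
  proof
    fix z assume "z \<in> downset (f ` L)"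
    then obtain l where "l \<in> L" "z \<le> f l" unfolding downset_def by blast
    then obtain u where u: "l \<le> u" "u \<in> L" "u \<in> U"
      using mixed_pdD(4)[OF LU] unfolding downset_def by blast
    have "z \<le> f u"
      using order_trans[OF \<open>z \<le> f l\<close> monoD[OF assms(2) u(1)]] .
    moreover have "f u \<in> downset (f ` L) \<inter> upset (f ` U)"
      using u unfolding downset_def upset_def by blast
    ultimately show "z \<in> downset (downset (f ` L) \<inter> upset (f ` U))"
      unfolding downset_def by blast
  qed
  moreover have "downset (downset (f ` L) \<inter> upset (f ` U)) \<subseteq> downset (f ` L)"
    using downset_downset[of "f ` L"] unfolding downset_def by blast
  moreover have "scott_closed (downset (f ` L))"
    using scott_closed_scott_closure scott_closure_finite[OF alg fin(1)] by metis
  moreover have "closedin lawson (upset (f ` U))"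
    using closedin_lawson_upset_finite[OF alg fin(2)] .
  ultimately show ?thesis
    unfolding mixed_pd_def by (auto simp: upset_upset)
qed

lemma scott_closure_Union_fst_meets_snd:
  fixes P :: "('a::order set \<times> 'a set) set"
  assumes P: "P \<subseteq> mixed_pd"
    and directed: "\<And>p q. p \<in> P \<Longrightarrow> q \<in> P \<Longrightarrow> \<exists>r\<in>P. mixed_le p r \<and> mixed_le q r"
    and c: "c \<in> KD" "c \<in> scott_closure (\<Union>(fst ` P))" and "p \<in> P"
  shows "\<exists>w. c \<le> w \<and> w \<in> scott_closure (\<Union>(fst ` P)) \<and> w \<in> snd p"
proof -
  obtain q l where "q \<in> P" "l \<in> fst q" "c \<le> l"
    using compact_in_scott_closure[OF c] unfolding downset_def by blast
  then have "c \<in> fst q"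
    using mixed_pd_fst_downward_closed[of "fst q" "snd q"] P by auto
  obtain r where "r \<in> P" "mixed_le q r" "mixed_le p r"
    using directed[OF \<open>q \<in> P\<close> \<open>p \<in> P\<close>] by blast
  then obtain w where "c \<le> w" "w \<in> fst r" "w \<in> snd r"
    using mixed_pd_fst_below_snd[of "fst r" "snd r" c] P \<open>c \<in> fst q\<close>
    unfolding mixed_le_def by auto
  moreover have "w \<in> scott_closure (\<Union>(fst ` P))"
    using \<open>w \<in> fst r\<close> \<open>r \<in> P\<close> subset_scott_closure[of "\<Union>(fst ` P)"] by blast
  moreover have "w \<in> snd p"
    using \<open>w \<in> snd r\<close> \<open>mixed_le p r\<close> unfolding mixed_le_def by blast
  ultimately show ?thesis
    by blast
qed

section \<open>Lawson compactness from finite deflations\<close>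

locale deflation_sequence =
  fixes \<delta> :: "nat \<Rightarrow> 'a::order \<Rightarrow> 'a"
  assumes algebraic: "algebraic TYPE('a)"
    and mono: "mono (\<delta> n)"
    and deflationary: "\<delta> n x \<le> x"
    and finite_range: "finite (range (\<delta> n))"
    and absorb: "\<delta> n (\<delta> (Suc n) x) = \<delta> n x"
    and lub_identity: "is_lub (range (\<lambda>n. \<delta> n x)) x"
begin

lemma increasing: "\<delta> n x \<le> \<delta> (Suc n) x"
  using deflationary[of n "\<delta> (Suc n) x"] by (simp add: absorb)

lemma finite_image: "finite (\<delta> n ` X)"
  using finite_range by (rule finite_subset[rotated]) blast

lemma eventually_fixed_compact:
  assumes "k \<in> KD"
  shows "\<forall>\<^sub>F n in sequentially. \<delta> n k = k"
  using eventually_compact_below_chain[of "\<lambda>n. \<delta> n k", OF increasing lub_identity assms order_refl]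
  by (rule eventually_mono) (simp add: antisym deflationary)

lemma lub_in_lawson_closed:
  assumes closed: "closedin lawson F"
    and chain: "\<And>n. p n \<le> p (Suc n)" and lub: "is_lub (range p) y"
    and approx: "\<And>n. p n \<in> \<delta> n ` F"
  shows "y \<in> F"
proof (rule ccontr)
  assume "y \<notin> F"
  then obtain C L where "finite C" "finite L" "C \<subseteq> KD" "L \<subseteq> KD"
    and y: "y \<in> lawson_basic C L" and disjoint: "lawson_basic C L \<subseteq> - F"
    using openin_lawson_basic_nbhd[of "- F" y] closed closedin_lawson_iff[OF algebraic] by blast
  then have "\<forall>\<^sub>F n in sequentially. (\<forall>c\<in>C. c \<le> p n) \<and> (\<forall>l\<in>L. \<delta> n l = l)"
    using eventually_compact_below_chain[OF chain lub] eventually_fixed_compact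
    unfolding lawson_basic_def
    by (intro eventually_conj eventually_ball_finite) auto
  then obtain n where below: "\<forall>c\<in>C. c \<le> p n" and fixed: "\<forall>l\<in>L. \<delta> n l = l"
    unfolding eventually_sequentially by blast
  obtain f where "f \<in> F" and pn: "p n = \<delta> n f"
    using approx by blast
  have "f \<in> lawson_basic C L"
    unfolding lawson_basic_def
  proof (intro CollectI conjI ballI)
    fix c assume "c \<in> C"
    then have "c \<le> p n"
      using below by blast
    then show "c \<le> f"
      unfolding pn using deflationary[of n f] by (rule order_trans)
  next
    fix l assume "l \<in> L"
    show "\<not> l \<le> f"
    proof
      assume "l \<le> f"
      then have "\<delta> n l \<le> \<delta> n f"
        by (rule monoD[OF mono])
      moreover have "\<delta> n l = l"
        using fixed \<open>l \<in> L\<close> by blast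
      ultimately have "l \<le> p n"
        by (simp add: pn)
      then have "l \<le> y"
        using is_lub_upper[OF lub] order_trans by blast
      then show False
        using y \<open>l \<in> L\<close> unfolding lawson_basic_def by blast
    qed
  qed
  then show False
    using disjoint \<open>f \<in> F\<close> by blast
qed

lemma filtered_stable_image:
  assumes "I \<noteq> {}" and filtered: "\<And>i j. i \<in> I \<Longrightarrow> j \<in> I \<Longrightarrow> \<exists>k\<in>I. F k \<subseteq> F i \<inter> F j"
  shows "\<exists>i0\<in>I. \<delta> n ` F i0 = (\<Inter>i\<in>I. \<delta> n ` F i)"
proof -
  obtain i0 where "i0 \<in> I" and least: "\<And>i. i \<in> I \<Longrightarrow> card (\<delta> n ` F i0) \<le> card (\<delta> n ` F i)"
    using ex_has_least_nat[of "\<lambda>i. i \<in> I" _ "\<lambda>i. card (\<delta> n ` F i)"] assms(1) by blast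
  have "\<delta> n ` F i0 \<subseteq> \<delta> n ` F i" if i: "i \<in> I" for i
  proof -
    obtain k where "k \<in> I" "F k \<subseteq> F i \<inter> F i0"
      using filtered[OF i \<open>i0 \<in> I\<close>] by blast
    then have sub: "\<delta> n ` F k \<subseteq> \<delta> n ` F i0"
      by blast
    have "card (\<delta> n ` F k) = card (\<delta> n ` F i0)"
      using card_mono[OF finite_image sub] least[OF \<open>k \<in> I\<close>] by (rule antisym)
    then have "\<delta> n ` F k = \<delta> n ` F i0"
      by (rule card_subset_eq[OF finite_image sub])
    then show ?thesis
      using \<open>F k \<subseteq> F i \<inter> F i0\<close> by blast
  qed
  then show ?thesis
    using \<open>i0 \<in> I\<close> by blast
qed

theorem lawson_filtered_Inter_nonempty:
  fixes F :: "'i \<Rightarrow> 'a set"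
  assumes "I \<noteq> {}" and closed: "\<And>i. i \<in> I \<Longrightarrow> closedin lawson (F i)"
    and nonempty: "\<And>i. i \<in> I \<Longrightarrow> F i \<noteq> {}"
    and filtered: "\<And>i j. i \<in> I \<Longrightarrow> j \<in> I \<Longrightarrow> \<exists>k\<in>I. F k \<subseteq> F i \<inter> F j"
  shows "(\<Inter>i\<in>I. F i) \<noteq> {}"
proof -
  define P where "P n = (\<Inter>i\<in>I. \<delta> n ` F i)" for n
  have stable: "\<exists>i0\<in>I. \<delta> n ` F i0 = P n" for n
    unfolding P_def using filtered_stable_image[OF assms(1) filtered] .
  have "P 0 \<noteq> {}"
    using stable[of 0] nonempty by fastforce
  moreover have "\<exists>y. y \<in> P (Suc n) \<and> \<delta> n y = x" if x: "x \<in> P n" for x n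
  proof -
    obtain i0 where "i0 \<in> I" "\<delta> (Suc n) ` F i0 = P (Suc n)"
      using stable by blast
    moreover obtain f where "f \<in> F i0" "x = \<delta> n f"
      using x \<open>i0 \<in> I\<close> unfolding P_def by blast
    ultimately show ?thesis
      using absorb by blast
  qed
  ultimately obtain p where p: "\<And>n. p n \<in> P n" and thread: "\<And>n. \<delta> n (p (Suc n)) = p n"
    using dependent_nat_choice[of "\<lambda>n x. x \<in> P n" "\<lambda>n x y. \<delta> n y = x"] by blast
  have chain: "p n \<le> p (Suc n)" for n
    using deflationary[of n "p (Suc n)"] by (simp add: thread)
  obtain y where y: "is_lub (range p) y"
    using algebraic directed_chain_range[of p, OF chain]
    unfolding algebraic_def dcpo_def by blast
  have "y \<in> F i" if "i \<in> I" for i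
    using lub_in_lawson_closed[OF closed[OF that] chain y] p that unfolding P_def by blast
  then show ?thesis
    using assms(1) by blast
qed

lemma mixed_pd_directed_sup_fst:
  fixes P :: "('a set \<times> 'a set) set"
  assumes P: "P \<subseteq> mixed_pd" "P \<noteq> {}"
    and directed: "\<And>p q. p \<in> P \<Longrightarrow> q \<in> P \<Longrightarrow> \<exists>r\<in>P. mixed_le p r \<and> mixed_le q r"
  defines "L \<equiv> scott_closure (\<Union>(fst ` P))"
  shows "L \<subseteq> downset (L \<inter> \<Inter>(snd ` P))"
proof
  fix z assume "z \<in> L"
  define I where "I = compacts_below z \<times> P"
  define F where "F i = upset {fst i} \<inter> L \<inter> snd (snd i)" for i :: "'a \<times> 'a set \<times> 'a set"
  have "I \<noteq> {}"
    using compacts_below_nonempty[OF algebraic] P(2) unfolding I_def by blast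
  moreover have "F i \<noteq> {}" if "i \<in> I" for i
  proof -
    have "fst i \<in> L"
      using scott_closed_scott_closure[of "\<Union>(fst ` P)"] \<open>z \<in> L\<close> \<open>i \<in> I\<close>
      unfolding I_def L_def scott_closed_iff by auto
    then show ?thesis
      using scott_closure_Union_fst_meets_snd[OF P(1) directed, of "fst i" "snd i"] \<open>i \<in> I\<close>
      unfolding I_def F_def L_def upset_def by auto
  qed
  moreover have "closedin lawson (F i)" if "i \<in> I" for i
  proof -
    have "closedin lawson L"
      unfolding L_def by (rule scott_closed_imp_lawson_closed[OF algebraic scott_closed_scott_closure])
    moreover have "snd i \<in> mixed_pd"
      using \<open>i \<in> I\<close> P(1) unfolding I_def by auto
    then have "closedin lawson (snd (snd i))"
      by (rule closedin_lawson_snd_mixed_pd)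
    ultimately show ?thesis
      unfolding F_def using closedin_lawson_upset_single[OF algebraic] by (intro closedin_Int)
  qed
  moreover have "\<exists>k\<in>I. F k \<subseteq> F i \<inter> F j" if ij: "i \<in> I" "j \<in> I" for i j
  proof -
    obtain c where "c \<in> compacts_below z" "fst i \<le> c" "fst j \<le> c"
      using directed_upper_bound[OF algebraicD(1)[OF algebraic]] ij unfolding I_def by force
    moreover obtain p where "p \<in> P" "mixed_le (snd i) p" "mixed_le (snd j) p"
      using directed ij unfolding I_def by force
    ultimately have "(c, p) \<in> I" "F (c, p) \<subseteq> F i \<inter> F j"
      using upset_singleton_antimono[of "fst i" c] upset_singleton_antimono[of "fst j" c]
      unfolding I_def F_def mixed_le_def by auto
    then show ?thesis
      by blast
  qed
  ultimately obtain w where w: "w \<in> (\<Inter>i\<in>I. F i)"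
    using lawson_filtered_Inter_nonempty[of I F] by blast
  obtain p0 where "p0 \<in> P"
    using P(2) by blast
  have "k \<le> w" if "k \<in> KD" "k \<le> z" for k
    using w \<open>p0 \<in> P\<close> that unfolding I_def F_def upset_def by auto
  then have "z \<le> w"
    by (rule le_if_compacts_below_le[OF algebraic])
  moreover have "w \<in> L" "w \<in> \<Inter>(snd ` P)"
    using w \<open>I \<noteq> {}\<close> unfolding I_def F_def by auto
  ultimately show "z \<in> downset (L \<inter> \<Inter>(snd ` P))"
    unfolding downset_def by blast
qed

lemma mixed_pd_directed_sup:
  fixes P :: "('a set \<times> 'a set) set"
  assumes P: "P \<subseteq> mixed_pd" "P \<noteq> {}"
    and directed: "\<And>p q. p \<in> P \<Longrightarrow> q \<in> P \<Longrightarrow> \<exists>r\<in>P. mixed_le p r \<and> mixed_le q r"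
  shows "(scott_closure (\<Union>(fst ` P)), \<Inter>(snd ` P)) \<in> mixed_pd"
proof -
  let ?L = "scott_closure (\<Union>(fst ` P))" and ?U = "\<Inter>(snd ` P)"
  have "?L \<subseteq> downset (?L \<inter> ?U)"
    using mixed_pd_directed_sup_fst[OF assms] .
  moreover have "downset (?L \<inter> ?U) \<subseteq> ?L"
    using scott_closed_scott_closure[of "\<Union>(fst ` P)"]
    unfolding scott_closed_iff downset_def by blast
  moreover have "closedin lawson ?U"
    using P closedin_lawson_snd_mixed_pd by (intro closedin_INT) auto
  moreover have "upset ?U = ?U"
    using P(1) mixed_pd_snd_upward_closed unfolding upset_def by fastforce
  ultimately show ?thesis
    unfolding mixed_pd_def using scott_closed_scott_closure by blast
qed

end

section \<open>Approximants of the initial solution\<close>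

locale mixed_domain =
  fixes isom :: "'d::order \<Rightarrow> ('act::finite \<Rightarrow> 'd set \<times> 'd set)"
  assumes initial: "initial_solution isom"
begin

abbreviation Lset :: "'d \<Rightarrow> 'act \<Rightarrow> 'd set" where
  "Lset d \<alpha> \<equiv> fst (isom d \<alpha>)"

abbreviation Uset :: "'d \<Rightarrow> 'act \<Rightarrow> 'd set" where
  "Uset d \<alpha> \<equiv> snd (isom d \<alpha>)"

lemma algebraic_solution: "algebraic TYPE('d)"
  using initial unfolding initial_solution_def bifinite_def by blast

lemma bij_isom: "bij_betw isom UNIV {g. \<forall>\<alpha>. g \<alpha> \<in> mixed_pd}"
  using initial unfolding initial_solution_def is_solution_def by blast

lemma le_iff_Lset_Uset: "d \<le> d' \<longleftrightarrow> (\<forall>\<alpha>. Lset d \<alpha> \<subseteq> Lset d' \<alpha> \<and> Uset d' \<alpha> \<subseteq> Uset d \<alpha>)"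
  using initial unfolding initial_solution_def is_solution_def mixed_le_def by blast

lemma Lset_mono: "d \<le> d' \<Longrightarrow> Lset d \<alpha> \<subseteq> Lset d' \<alpha>"
  using le_iff_Lset_Uset by blast

lemma Uset_antimono: "d \<le> d' \<Longrightarrow> Uset d' \<alpha> \<subseteq> Uset d \<alpha>"
  using le_iff_Lset_Uset by blast

lemma isom_mixed_pd: "isom d \<alpha> \<in> mixed_pd"
  using bij_isom unfolding bij_betw_def by blast

lemma Lset_downward_closed: "y \<le> x \<Longrightarrow> x \<in> Lset d \<alpha> \<Longrightarrow> y \<in> Lset d \<alpha>"
  using mixed_pd_fst_downward_closed[of "Lset d \<alpha>" "Uset d \<alpha>"] isom_mixed_pd by simp

lemma isom_inv_isom: "(\<And>\<alpha>. g \<alpha> \<in> mixed_pd) \<Longrightarrow> isom (inv isom g) = g"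
  using bij_isom unfolding bij_betw_def by (simp add: f_inv_into_f)

lemma inj_isom: "inj isom"
  using bij_isom by (rule bij_betw_imp_inj_on)

lemma isom_approx_0: "isom (approx isom 0 d) = (\<lambda>\<alpha>. ({}, UNIV))"
  using isom_inv_isom[of "\<lambda>\<alpha>. ({}, UNIV)"] bot_mixed_pd[OF algebraic_solution] by simp

lemma approx_0_least: "approx isom 0 d \<le> x"
  unfolding le_iff_Lset_Uset isom_approx_0 by simp

lemma isom_approx_Suc_if:
  assumes "mono (approx isom n)" "finite (range (approx isom n))"
  shows "isom (approx isom (Suc n) d) =
    (\<lambda>\<alpha>. (downset (approx isom n ` Lset d \<alpha>), upset (approx isom n ` Uset d \<alpha>)))"
proof -
  have "finite (approx isom n ` Lset d \<alpha>)" for \<alpha>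
    using assms(2) by (rule finite_subset[rotated]) blast
  then have "mixed_map (approx isom n) (isom d \<alpha>) =
      (downset (approx isom n ` Lset d \<alpha>), upset (approx isom n ` Uset d \<alpha>))" for \<alpha>
    unfolding mixed_map_def by (simp add: scott_closure_finite[OF algebraic_solution])
  moreover have "(downset (approx isom n ` Lset d \<alpha>), upset (approx isom n ` Uset d \<alpha>)) \<in> mixed_pd" for \<alpha>
    using mixed_pd_image[OF algebraic_solution assms] isom_mixed_pd[of d \<alpha>] by simp
  ultimately show ?thesis
    by (simp add: approx_step_def isom_inv_isom)
qed

lemma mono_finite_range_approx: "mono (approx isom n) \<and> finite (range (approx isom n))"
proof (induction n)
  case 0
  have "range (approx isom 0) = {inv isom (\<lambda>\<alpha>. ({}, UNIV))}"
    by auto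
  then show ?case
    using approx_0_least by (simp add: monoI)
next
  case (Suc n)
  let ?R = "range (approx isom n)"
  note isom_Suc = isom_approx_Suc_if[OF Suc.IH[THEN conjunct1] Suc.IH[THEN conjunct2]]
  have "mono (approx isom (Suc n))"
  proof (rule monoI)
    fix x y :: 'd assume "x \<le> y"
    then have "Lset x \<alpha> \<subseteq> Lset y \<alpha>" "Uset y \<alpha> \<subseteq> Uset x \<alpha>" for \<alpha>
      using Lset_mono Uset_antimono by blast+
    then show "approx isom (Suc n) x \<le> approx isom (Suc n) y"
      unfolding le_iff_Lset_Uset[of "approx isom (Suc n) x"] isom_Suc
      by (simp add: downset_mono upset_mono image_mono)
  qed
  moreover have "finite (range (approx isom (Suc n)))"
  proof -
    let ?B = "downset ` Pow ?R \<times> upset ` Pow ?R"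
    have "finite {g::'act \<Rightarrow> _. \<forall>\<alpha>. g \<alpha> \<in> ?B}"
      using finite_set_of_finite_funs[of "UNIV::'act set" ?B] Suc.IH by simp
    moreover have "isom ` range (approx isom (Suc n)) \<subseteq> {g. \<forall>\<alpha>. g \<alpha> \<in> ?B}"
    proof
      fix g assume "g \<in> isom ` range (approx isom (Suc n))"
      then obtain d where "g = isom (approx isom (Suc n) d)"
        by blast
      then show "g \<in> {g. \<forall>\<alpha>. g \<alpha> \<in> ?B}"
        unfolding isom_Suc by blast
    qed
    ultimately show ?thesis
      using finite_imageD[OF _ inj_on_subset[OF inj_isom]] finite_subset by blast
  qed
  ultimately show ?case ..
qed

lemma mono_approx: "mono (approx isom n)"
  using mono_finite_range_approx by blast

lemma finite_range_approx: "finite (range (approx isom n))"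
  using mono_finite_range_approx by blast

lemma isom_approx_Suc:
  "isom (approx isom (Suc n) d) =
    (\<lambda>\<alpha>. (downset (approx isom n ` Lset d \<alpha>), upset (approx isom n ` Uset d \<alpha>)))"
  using isom_approx_Suc_if[OF mono_approx finite_range_approx] .

lemma approx_deflationary: "approx isom n x \<le> x"
proof (induction n arbitrary: x)
  case 0
  show ?case by (rule approx_0_least)
next
  case (Suc n)
  have "downset (approx isom n ` Lset x \<alpha>) \<subseteq> Lset x \<alpha>" for \<alpha>
  proof
    fix z assume "z \<in> downset (approx isom n ` Lset x \<alpha>)"
    then obtain l where "l \<in> Lset x \<alpha>" "z \<le> approx isom n l"
      unfolding downset_def by blast
    then show "z \<in> Lset x \<alpha>"
      using Lset_downward_closed[OF order_trans[OF _ Suc.IH]] by blast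
  qed
  moreover have "Uset x \<alpha> \<subseteq> upset (approx isom n ` Uset x \<alpha>)" for \<alpha>
    unfolding upset_def using Suc.IH by blast
  ultimately show ?case
    unfolding le_iff_Lset_Uset[of "approx isom (Suc n) x"] isom_approx_Suc by simp
qed

lemma approx_absorb: "approx isom n (approx isom (Suc n) x) = approx isom n x"
proof (induction n arbitrary: x)
  case 0
  show ?case by simp
next
  case (Suc n)
  show ?case
  proof (rule injD[OF inj_isom], rule ext)
    fix \<alpha>
    show "isom (approx isom (Suc n) (approx isom (Suc (Suc n)) x)) \<alpha> = isom (approx isom (Suc n) x) \<alpha>"
      unfolding isom_approx_Suc
      using downset_image_downset_image[OF mono_approx Suc.IH]
        upset_image_upset_image[OF mono_approx Suc.IH]
      by simp
  qed
qed

lemma lub_approx: "is_lub (range (\<lambda>n. approx isom n d)) d"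
  using initial unfolding initial_solution_def minimal_invariant_def by blast

end

sublocale mixed_domain \<subseteq> deflation_sequence "approx isom"
  using algebraic_solution mono_approx approx_deflationary finite_range_approx approx_absorb lub_approx
  by unfold_locales

context mixed_domain
begin

lemma isom_lub:
  assumes "directed S" "is_lub S s"
  shows "Lset s \<alpha> \<subseteq> scott_closure (\<Union>x\<in>S. Lset x \<alpha>) \<and> (\<Inter>x\<in>S. Uset x \<alpha>) \<subseteq> Uset s \<alpha>"
proof -
  define lim where "lim \<beta> = (scott_closure (\<Union>x\<in>S. Lset x \<beta>), \<Inter>x\<in>S. Uset x \<beta>)" for \<beta>
  have "lim \<beta> \<in> mixed_pd" for \<beta>
  proof -
    have "\<exists>r\<in>(\<lambda>x. isom x \<beta>) ` S. mixed_le p r \<and> mixed_le q r"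
      if pq: "p \<in> (\<lambda>x. isom x \<beta>) ` S" "q \<in> (\<lambda>x. isom x \<beta>) ` S" for p q
    proof -
      from pq obtain x y where "x \<in> S" "y \<in> S" "p = isom x \<beta>" "q = isom y \<beta>"
        by blast
      moreover obtain z where "z \<in> S" "x \<le> z" "y \<le> z"
        using directed_upper_bound[OF assms(1) \<open>x \<in> S\<close> \<open>y \<in> S\<close>] by blast
      ultimately show ?thesis
        unfolding mixed_le_def using Lset_mono Uset_antimono by blast
    qed
    then have "(scott_closure (\<Union>(fst ` (\<lambda>x. isom x \<beta>) ` S)), \<Inter>(snd ` (\<lambda>x. isom x \<beta>) ` S)) \<in> mixed_pd"
      using isom_mixed_pd directed_nonempty[OF assms(1)]
      by (intro mixed_pd_directed_sup) auto
    then show ?thesis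
      unfolding lim_def image_image by simp
  qed
  then have isom_lim: "isom (inv isom lim) = lim"
    by (rule isom_inv_isom)
  have "x \<le> inv isom lim" if "x \<in> S" for x
    unfolding le_iff_Lset_Uset[of x] isom_lim lim_def
    using that subset_scott_closure by fastforce
  then have "s \<le> inv isom lim"
    using is_lub_least[OF assms(2)] by blast
  then have "Lset s \<alpha> \<subseteq> Lset (inv isom lim) \<alpha>" "Uset (inv isom lim) \<alpha> \<subseteq> Uset s \<alpha>"
    by (simp_all only: Lset_mono Uset_antimono)
  then show ?thesis
    unfolding isom_lim lim_def by simp
qed

lemma compact_in_Lset_lub:
  assumes "a \<in> KD" "directed S" "is_lub S s" "a \<in> Lset s \<alpha>"
  shows "\<exists>x\<in>S. a \<in> Lset x \<alpha>"
proof -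
  have "a \<in> downset (\<Union>x\<in>S. Lset x \<alpha>)"
    using compact_in_scott_closure[OF assms(1)] isom_lub[OF assms(2,3)] assms(4) by blast
  then obtain x l where "x \<in> S" "l \<in> Lset x \<alpha>" "a \<le> l"
    unfolding downset_def by blast
  then show ?thesis
    using Lset_downward_closed by blast
qed

lemma Uset_lub_below_upset:
  assumes "directed S" "is_lub S s" "finite B" "B \<subseteq> KD" "Uset s \<alpha> \<subseteq> upset B"
  shows "\<exists>x\<in>S. Uset x \<alpha> \<subseteq> upset B"
proof (rule ccontr)
  assume "\<not> (\<exists>x\<in>S. Uset x \<alpha> \<subseteq> upset B)"
  then have "Uset x \<alpha> - upset B \<noteq> {}" if "x \<in> S" for x
    using that by blast
  moreover have "closedin lawson (Uset x \<alpha> - upset B)" for x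
  proof -
    have "closedin lawson (- upset B)"
      using openin_lawson_upset[OF assms(4)] closedin_lawson_iff[OF algebraic_solution] by simp
    then show ?thesis
      using closedin_lawson_snd_mixed_pd[OF isom_mixed_pd] by (simp add: Diff_eq closedin_Int)
  qed
  moreover have "\<exists>z\<in>S. Uset z \<alpha> - upset B \<subseteq> (Uset x \<alpha> - upset B) \<inter> (Uset y \<alpha> - upset B)"
    if "x \<in> S" "y \<in> S" for x y
    using directed_upper_bound[OF assms(1) that] Uset_antimono by blast
  ultimately obtain w where "w \<in> (\<Inter>x\<in>S. Uset x \<alpha> - upset B)"
    using lawson_filtered_Inter_nonempty[of S "\<lambda>x. Uset x \<alpha> - upset B"]
      directed_nonempty[OF assms(1)] by blast
  then show False
    using isom_lub[OF assms(1,2)] assms(5) directed_nonempty[OF assms(1)] by blast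
qed

lemma le_if_generators_in:
  assumes "\<And>\<alpha>. Lset e \<alpha> = downset (A \<alpha>)" "\<And>\<alpha>. Uset e \<alpha> = upset (B \<alpha>)"
    and "\<And>\<alpha> a. a \<in> A \<alpha> \<Longrightarrow> a \<in> Lset z \<alpha>" "\<And>\<alpha>. Uset z \<alpha> \<subseteq> upset (B \<alpha>)"
  shows "e \<le> z"
  unfolding le_iff_Lset_Uset[of e]
proof (intro allI conjI)
  fix \<alpha>
  show "Lset e \<alpha> \<subseteq> Lset z \<alpha>"
    unfolding assms(1) downset_def using assms(3) Lset_downward_closed by blast
  show "Uset z \<alpha> \<subseteq> Uset e \<alpha>"
    unfolding assms(2) using assms(4) .
qed

lemma compact_if_finitely_generated:
  assumes L: "\<And>\<alpha>. Lset e \<alpha> = downset (A \<alpha>)" "\<And>\<alpha>. finite (A \<alpha>)" "\<And>\<alpha>. A \<alpha> \<subseteq> KD"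
    and U: "\<And>\<alpha>. Uset e \<alpha> = upset (B \<alpha>)" "\<And>\<alpha>. finite (B \<alpha>)" "\<And>\<alpha>. B \<alpha> \<subseteq> KD"
  shows "e \<in> KD"
  unfolding KD_def compact_el_def
proof (intro CollectI allI impI)
  fix S s assume "directed S \<and> is_lub S s \<and> e \<le> s"
  then have S: "directed S" "is_lub S s" and "e \<le> s"
    by blast+
  have reach_L: "\<exists>x\<in>S. snd p \<in> Lset x (fst p)" if "p \<in> Sigma UNIV A" for p
  proof (rule compact_in_Lset_lub[OF _ S])
    show "snd p \<in> KD"
      using that L(3)[of "fst p"] by auto
    have "snd p \<in> Lset e (fst p)"
      using that unfolding L(1) downset_def by auto
    then show "snd p \<in> Lset s (fst p)"
      using Lset_mono[OF \<open>e \<le> s\<close>] by blast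
  qed
  have "\<exists>x\<in>S. \<forall>p\<in>Sigma UNIV A. snd p \<in> Lset x (fst p)"
    by (rule directed_ex_all_finite[OF S(1)]) (use reach_L L(2) in \<open>auto intro: Lset_mono[THEN subsetD]\<close>)
  then obtain xL where "xL \<in> S" and xL: "\<forall>p\<in>Sigma UNIV A. snd p \<in> Lset xL (fst p)"
    by blast
  have reach_U: "\<exists>x\<in>S. Uset x \<alpha> \<subseteq> upset (B \<alpha>)" for \<alpha>
    using Uset_lub_below_upset[OF S U(2,3)] Uset_antimono[OF \<open>e \<le> s\<close>] U(1) by blast
  have "\<exists>x\<in>S. \<forall>\<alpha>\<in>UNIV. Uset x \<alpha> \<subseteq> upset (B \<alpha>)"
    by (rule directed_ex_all_finite[OF S(1)]) (use reach_U Uset_antimono in \<open>simp_all, blast\<close>)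
  then obtain xU where "xU \<in> S" and xU: "\<forall>\<alpha>. Uset xU \<alpha> \<subseteq> upset (B \<alpha>)"
    by blast
  obtain z where "z \<in> S" "xL \<le> z" "xU \<le> z"
    using directed_upper_bound[OF S(1) \<open>xL \<in> S\<close> \<open>xU \<in> S\<close>] by blast
  have "e \<le> z"
  proof (rule le_if_generators_in)
    show "a \<in> Lset z \<alpha>" if "a \<in> A \<alpha>" for \<alpha> a
      using xL that Lset_mono[OF \<open>xL \<le> z\<close>] by auto
    show "Uset z \<alpha> \<subseteq> upset (B \<alpha>)" for \<alpha>
      using xU Uset_antimono[OF \<open>xU \<le> z\<close>] by blast
  qed (use L(1) U(1) in auto)
  then show "\<exists>x\<in>S. e \<le> x"
    using \<open>z \<in> S\<close> by blast
qed

lemma approx_in_KD: "approx isom n d \<in> KD"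
proof (induction n arbitrary: d)
  case 0
  show ?case
    using approx_0_least by (rule least_in_KD)
next
  case (Suc n)
  show ?case
    by (rule compact_if_finitely_generated[where A = "\<lambda>\<alpha>. approx isom n ` Lset d \<alpha>"
          and B = "\<lambda>\<alpha>. approx isom n ` Uset d \<alpha>"])
      (use Suc.IH finite_image in \<open>auto simp del: approx.simps simp: isom_approx_Suc\<close>)
qed

end

section \<open>Modal satisfaction\<close>

fun modal_depth :: "'act hml \<Rightarrow> nat" where
  "modal_depth TT = 0"
| "modal_depth (Neg \<phi>) = modal_depth \<phi>"
| "modal_depth (Dia \<alpha> \<phi>) = Suc (modal_depth \<phi>)"
| "modal_depth (Conj \<phi> \<psi>) = max (modal_depth \<phi>) (modal_depth \<psi>)"

context mixed_domain
begin

lemma sat_mono: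
  assumes "x \<le> y"
  shows "(sat isom ModeA x \<phi> \<longrightarrow> sat isom ModeA y \<phi>) \<and> (sat isom ModeC y \<phi> \<longrightarrow> sat isom ModeC x \<phi>)"
  using assms
proof (induction \<phi> arbitrary: x y)
  case (Neg \<phi>)
  then show ?case by auto
next
  case (Dia \<alpha> \<phi>)
  then show ?case
    using Lset_mono[OF Dia.prems, of \<alpha>] Uset_antimono[OF Dia.prems, of \<alpha>] by auto
qed simp_all

lemma sat_approx:
  assumes "modal_depth \<phi> \<le> n"
  shows "sat isom m (approx isom n d) \<phi> = sat isom m d \<phi>"
  using assms
proof (induction \<phi> arbitrary: n m d)
  case (Dia \<alpha> \<phi>)
  then obtain k where n: "n = Suc k" and IH: "\<And>m d. sat isom m (approx isom k d) \<phi> = sat isom m d \<phi>"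
    by (cases n) auto
  show ?case
  proof (cases m)
    case ModeA
    have "(\<exists>y\<in>downset (approx isom k ` Lset d \<alpha>). sat isom ModeA y \<phi>)
        \<longleftrightarrow> (\<exists>l\<in>Lset d \<alpha>. sat isom ModeA (approx isom k l) \<phi>)"
      using sat_mono by (intro bex_downset_image_iff) blast
    then show ?thesis
      using ModeA IH by (simp del: approx.simps add: n isom_approx_Suc Bex_def)
  next
    case ModeC
    have "(\<exists>y\<in>upset (approx isom k ` Uset d \<alpha>). sat isom ModeC y \<phi>)
        \<longleftrightarrow> (\<exists>u\<in>Uset d \<alpha>. sat isom ModeC (approx isom k u) \<phi>)"
      using sat_mono by (intro bex_upset_image_iff) blast
    then show ?thesis
      using ModeC IH by (simp del: approx.simps add: n isom_approx_Suc Bex_def)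
  qed
qed simp_all

lemma lawson_clopen_if_approx_stable:
  assumes up: "\<And>x y. x \<le> y \<Longrightarrow> x \<in> S \<Longrightarrow> y \<in> S"
    and stable: "\<And>d. d \<in> S \<Longrightarrow> approx isom n d \<in> S"
  shows "lawson_clopen S"
proof -
  have "S = upset (S \<inter> range (approx isom n))"
    using up stable approx_deflationary unfolding upset_def by blast
  moreover have "finite (S \<inter> range (approx isom n))"
    using finite_range_approx by simp
  moreover have "S \<inter> range (approx isom n) \<subseteq> KD"
    using approx_in_KD by blast
  ultimately show ?thesis
    using lawson_clopen_upset[OF algebraic_solution] by metis
qed

lemma lawson_clopen_sem_ModeA: "lawson_clopen (sem isom ModeA \<phi>)"
  using sat_mono sat_approx[of \<phi> "modal_depth \<phi>" ModeA]
  unfolding sem_def by (intro lawson_clopen_if_approx_stable) auto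

lemma lawson_clopen_sem_ModeC: "lawson_clopen (sem isom ModeC \<phi>)"
proof -
  have "lawson_clopen (- sem isom ModeC \<phi>)"
    using sat_mono sat_approx[of \<phi> "modal_depth \<phi>" ModeC]
    unfolding sem_def by (intro lawson_clopen_if_approx_stable) auto
  then show ?thesis
    using lawson_clopen_Compl[OF algebraic_solution] by fastforce
qed

lemma closedin_lawson_C_Phi: "closedin lawson (C_Phi isom)"
proof -
  have "psi [] \<alpha> Bot \<in> (PhiSet :: 'act hml set)" for \<alpha>
    unfolding PhiSet_def using wf_proc.simps(2) by blast
  then have "(PhiSet :: 'act hml set) \<noteq> {}"
    by blast
  then show ?thesis
    unfolding C_Phi_def using lawson_clopen_sem_ModeA
    by (intro closedin_INT) (auto simp: lawson_clopen_def)
qed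

end

theorem lemma3p17:
  fixes isom :: "'d::order \<Rightarrow> ('act::finite \<Rightarrow> 'd set \<times> 'd set)"
  assumes "initial_solution isom"
  shows "(\<forall>\<phi>. lawson_clopen (sem isom ModeA \<phi>) \<and> lawson_clopen (sem isom ModeC \<phi>))
         \<and> closedin lawson (C_Phi isom)"
proof -
  interpret mixed_domain isom
    using assms by unfold_locales
  show ?thesis
    using lawson_clopen_sem_ModeA lawson_clopen_sem_ModeC closedin_lawson_C_Phi by blast
qed

end
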